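(* Let $K$ be an algebraically closed field of characteristic zero, $\mathcal{K} = K(t)$, and fix integers $d \ge 2$ and $N \ge 1$. Then $0$ does not realize portrait $(1,N)$ for $f_d(z) = z^d+t$.
   Context: For $c \in K$, let $f_{d,c}(z) = z^d+c$. A point $x$ has preperiodic portrait $(M,N)$ for $\phi$ if $M\ge0$ is minimal with $\phi^M(x)$ periodic and $\phi^M(x)$ has exact period $N$. We say $\alpha\in\mathcal{K}$ realizes portrait $(M,N)$ for $f_d$ if there exists $c \in K$ such that $\alpha(c)$ (reduction modulo the place $t=c$) has portrait $(M,N)$ for $f_{d,c}$. *)

theory Defs
  imports "HOL-Computational_Algebra.Computational_Algebra"
begin

definition is_periodic :: "('a \<Rightarrow> 'a) \<Rightarrow> 'a \<Rightarrow> bool" where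
  "is_periodic f x \<longleftrightarrow> (\<exists>n\<ge>1. (f ^^ n) x = x)"

definition exact_period :: "('a \<Rightarrow> 'a) \<Rightarrow> 'a \<Rightarrow> nat \<Rightarrow> bool" where
  "exact_period f x N \<longleftrightarrow> N \<ge> 1 \<and> (f ^^ N) x = x \<and> (\<forall>n. 1 \<le> n \<and> n < N \<longrightarrow> (f ^^ n) x \<noteq> x)"

definition has_portrait :: "('a \<Rightarrow> 'a) \<Rightarrow> 'a \<Rightarrow> nat \<Rightarrow> nat \<Rightarrow> bool" where
  "has_portrait f x M N \<longleftrightarrow>
     is_periodic f ((f ^^ M) x) \<and> (\<forall>m<M. \<not> is_periodic f ((f ^^ m) x)) \<and>
     exact_period f ((f ^^ M) x) N"

definition fdc :: "nat \<Rightarrow> 'a::field \<Rightarrow> 'a \<Rightarrow> 'a" where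
  "fdc d c z = z ^ d + c"

text \<open>Reduction of alpha in K(t) modulo the place t = c: write alpha = p/q in lowest terms;
  the reduction is defined (finite) iff q(c) is nonzero, and equals p(c)/q(c).\<close>
definition reduces_at :: "'a::field_gcd poly fract \<Rightarrow> 'a \<Rightarrow> 'a \<Rightarrow> bool" where
  "reduces_at \<alpha> c v \<longleftrightarrow> (case quot_of_fract \<alpha> of (p, q) \<Rightarrow> poly q c \<noteq> 0 \<and> v = poly p c / poly q c)"

definition realizes :: "'a::field_gcd poly fract \<Rightarrow> nat \<Rightarrow> nat \<Rightarrow> nat \<Rightarrow> bool" where
  "realizes \<alpha> d M N \<longleftrightarrow> (\<exists>c v. reduces_at \<alpha> c v \<and> has_portrait (fdc d c) v M N)"

definition alg_closed :: "'a::field itself \<Rightarrow> bool" where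
  "alg_closed _ \<longleftrightarrow> (\<forall>p :: 'a poly. degree p \<ge> 1 \<longrightarrow> (\<exists>x. poly p x = 0))"

end

theory Submission
  imports Defs
begin

text \<open>The critical point 0 is the only preimage of c under z^d + c. So if c = f(0) is periodic,
  the periodic cycle through c must re-enter c from 0, making 0 itself periodic; hence 0 never
  has preperiod exactly 1.\<close>

lemma is_periodic_if_image_periodic_unique_preimage:
  assumes "is_periodic f (f x)" and "\<And>y. f y = f x \<Longrightarrow> y = x"
  shows "is_periodic f x"
proof -
  obtain n where "n \<ge> 1" and cycle: "(f ^^ n) (f x) = f x"
    using assms(1) unfolding is_periodic_def by blast
  then obtain m where n: "n = Suc m"
    by (cases n) auto
  have "f ((f ^^ m) (f x)) = f x"
    using cycle by (simp add: n)
  then have "(f ^^ m) (f x) = x"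
    by (rule assms(2))
  then have "(f ^^ n) x = x"
    by (simp add: n funpow_Suc_right del: funpow.simps)
  with \<open>n \<ge> 1\<close> show ?thesis
    unfolding is_periodic_def by blast
qed

lemma fdc_eq_fdc_zero_iff:
  assumes "d \<ge> 1"
  shows "fdc d c y = fdc d c 0 \<longleftrightarrow> y = 0"
  using assms by (simp add: fdc_def zero_power)

lemma has_portrait_preperiod_one:
  assumes "has_portrait f x 1 N"
  shows "is_periodic f (f x)" and "\<not> is_periodic f x"
  using assms unfolding has_portrait_def by auto

lemma reduces_at_zero: "reduces_at (0 :: 'a::field_gcd poly fract) c v \<longleftrightarrow> v = 0"
  by (simp add: reduces_at_def)

theorem corollary3p5:
  assumes "alg_closed TYPE('a::{field_char_0,field_gcd})"
    and "d \<ge> 2" and "N \<ge> 1"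
  shows "\<not> realizes (0 :: 'a poly fract) d 1 N"
proof
  assume "realizes (0 :: 'a poly fract) d 1 N"
  then obtain c :: 'a where portrait: "has_portrait (fdc d c) 0 1 N"
    unfolding realizes_def reduces_at_zero by blast
  have "is_periodic (fdc d c) 0"
  proof (rule is_periodic_if_image_periodic_unique_preimage)
    show "is_periodic (fdc d c) (fdc d c 0)"
      using has_portrait_preperiod_one(1)[OF portrait] .
    show "y = 0" if "fdc d c y = fdc d c 0" for y
      using that fdc_eq_fdc_zero_iff[of d c y] \<open>d \<ge> 2\<close> by simp
  qed
  with has_portrait_preperiod_one(2)[OF portrait] show False ..
qed

end
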